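(* If $G$ is a graph, then $D(G)=n(G)-1$ if and only if $G$ is isomorphic to one of $C_4$, $2K_2$, $K_{t,1}$ (for some $t\ge 2$), or $K_t\cup K_1$ (for some $t\ge 2$).
   Context: All graphs are finite and simple; $n(G)=|V(G)|$; $C_4$ is the 4-cycle, $K_{s,t}$ the complete bipartite graph, $G\cup H$ the disjoint union and $2K_2=K_2\cup K_2$. A distinguishing coloring of a graph $G$ is a (not necessarily proper) vertex coloring such that the only automorphism of $G$ mapping every vertex to a vertex of the same color is the identity; the distinguishing number $D(G)$ is the minimum number of colors in a distinguishing coloring of $G$. *)

theory Defs
  imports Main
begin

definition graph :: "'a set \<Rightarrow> ('a \<Rightarrow> 'a \<Rightarrow> bool) \<Rightarrow> bool" where
  "graph V E \<longleftrightarrow> finite V \<and>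
     (\<forall>u v. E u v \<longrightarrow> u \<in> V \<and> v \<in> V \<and> u \<noteq> v \<and> E v u)"

definition automorphism :: "'a set \<Rightarrow> ('a \<Rightarrow> 'a \<Rightarrow> bool) \<Rightarrow> ('a \<Rightarrow> 'a) \<Rightarrow> bool" where
  "automorphism V E f \<longleftrightarrow> bij_betw f V V \<and>
     (\<forall>u\<in>V. \<forall>v\<in>V. E u v \<longleftrightarrow> E (f u) (f v))"

definition distinguishing_coloring ::
  "'a set \<Rightarrow> ('a \<Rightarrow> 'a \<Rightarrow> bool) \<Rightarrow> nat \<Rightarrow> ('a \<Rightarrow> nat) \<Rightarrow> bool" where
  "distinguishing_coloring V E k c \<longleftrightarrow> c ` V \<subseteq> {..<k} \<and>
     (\<forall>f. automorphism V E f \<and> (\<forall>v\<in>V. c (f v) = c v) \<longrightarrow> (\<forall>v\<in>V. f v = v))"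

definition distinguishing_number :: "'a set \<Rightarrow> ('a \<Rightarrow> 'a \<Rightarrow> bool) \<Rightarrow> nat" where
  "distinguishing_number V E = (LEAST k. \<exists>c. distinguishing_coloring V E k c)"

definition isomorphic ::
  "'a set \<Rightarrow> ('a \<Rightarrow> 'a \<Rightarrow> bool) \<Rightarrow> 'b set \<Rightarrow> ('b \<Rightarrow> 'b \<Rightarrow> bool) \<Rightarrow> bool" where
  "isomorphic V E W F \<longleftrightarrow> (\<exists>f. bij_betw f V W \<and>
     (\<forall>u\<in>V. \<forall>v\<in>V. E u v \<longleftrightarrow> F (f u) (f v)))"

definition C4_V :: "nat set" where "C4_V = {0..<4}"
definition C4_E :: "nat \<Rightarrow> nat \<Rightarrow> bool" where
  "C4_E u v \<longleftrightarrow> u < 4 \<and> v < 4 \<and> (v = (u + 1) mod 4 \<or> u = (v + 1) mod 4)"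

definition twoK2_V :: "nat set" where "twoK2_V = {0..<4}"
definition twoK2_E :: "nat \<Rightarrow> nat \<Rightarrow> bool" where
  "twoK2_E u v \<longleftrightarrow> {u, v} = {0, 1} \<or> {u, v} = {2, 3}"

text \<open>K_{t,1}: centre 0, leaves 1..t.\<close>
definition star_V :: "nat \<Rightarrow> nat set" where "star_V t = {0..t}"
definition star_E :: "nat \<Rightarrow> nat \<Rightarrow> nat \<Rightarrow> bool" where
  "star_E t u v \<longleftrightarrow> (u = 0 \<and> 1 \<le> v \<and> v \<le> t) \<or> (v = 0 \<and> 1 \<le> u \<and> u \<le> t)"

text \<open>K_t \<union> K_1: clique on 1..t, isolated vertex 0.\<close>
definition cliqueK1_V :: "nat \<Rightarrow> nat set" where "cliqueK1_V t = {0..t}"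
definition cliqueK1_E :: "nat \<Rightarrow> nat \<Rightarrow> nat \<Rightarrow> bool" where
  "cliqueK1_E t u v \<longleftrightarrow> u \<in> {1..t} \<and> v \<in> {1..t} \<and> u \<noteq> v"

end

theory Submission
  imports Defs "HOL-Combinatorics.Transposition"
begin

text \<open>
  Call x and y twins if they have the same neighbours outside {x, y}; then the transposition of x
  and y is an automorphism, so twins get different colours in every distinguishing colouring. Hence
  a distinguishing colouring with n - 1 colours exists iff some pair u, v is not twins (colour u and
  v alike and all other vertices distinctly).

  A colouring with n - 2 colours identifies a triple or two disjoint pairs. If none of these is
  distinguishing, then among any three vertices two are twins, and any two disjoint non-twin pairs
  are swapped simultaneously by an automorphism. The first fact splits V into the twin class A of u
  and the twin class V - A of v, so adjacency only depends on the classes of the endpoints; the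
  second forces both classes to have two vertices and the same inner adjacency, unless one class is
  a single vertex. These are C4, 2K2, K_{t,1} and K_t \<union> K_1. Conversely, in these graphs each
  class needs pairwise distinct colours, which excludes n - 2 colours if a class has n - 1 vertices;
  for two classes of size two, two colours match the classes to each other, and the simultaneous
  swap preserves such a colouring.
\<close>

section \<open>Twins and automorphisms\<close>

definition twins :: "'a set \<Rightarrow> ('a \<Rightarrow> 'a \<Rightarrow> bool) \<Rightarrow> 'a \<Rightarrow> 'a \<Rightarrow> bool" where
  "twins V E x y \<longleftrightarrow> (\<forall>w \<in> V - {x, y}. E x w \<longleftrightarrow> E y w)"

lemma graph_finite: "graph V E \<Longrightarrow> finite V"
  by (simp add: graph_def)

lemma graph_sym_iff: "graph V E \<Longrightarrow> E u v \<longleftrightarrow> E v u"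
  unfolding graph_def by blast

lemma graph_irrefl: "graph V E \<Longrightarrow> \<not> E u u"
  by (auto simp: graph_def)

lemma two_le_card_iff_ex_other:
  assumes "finite A" "u \<in> A"
  shows "2 \<le> card A \<longleftrightarrow> (\<exists>x \<in> A. x \<noteq> u)"
proof
  assume "2 \<le> card A"
  show "\<exists>x \<in> A. x \<noteq> u"
  proof (rule ccontr)
    assume "\<not> (\<exists>x \<in> A. x \<noteq> u)"
    then have "A \<subseteq> {u}" by blast
    then show False using card_mono[of "{u}" A] \<open>2 \<le> card A\<close> by simp
  qed
next
  assume "\<exists>x \<in> A. x \<noteq> u"
  then obtain x where "x \<in> A" "x \<noteq> u" by blast
  then show "2 \<le> card A" using card_mono[OF assms(1), of "{u, x}"] assms(2) by simp
qed

lemma two_le_card_obtain: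
  assumes "2 \<le> card A"
  obtains x y where "x \<in> A" "y \<in> A" "x \<noteq> y"
proof -
  have "finite A" by (rule card_ge_0_finite) (use assms in simp)
  moreover have "A \<noteq> {}" using assms by auto
  then obtain x where "x \<in> A" by blast
  then show ?thesis using two_le_card_iff_ex_other[OF \<open>finite A\<close> \<open>x \<in> A\<close>] assms that by blast
qed

lemma twins_refl: "twins V E x x"
  by (simp add: twins_def)

lemma twins_commute: "twins V E x y \<longleftrightarrow> twins V E y x"
  by (auto simp: twins_def)

lemma twins_trans:
  assumes g: "graph V E" and "x \<in> V" "z \<in> V" "twins V E x y" "twins V E y z"
  shows "twins V E x z"
  unfolding twins_def
proof
  fix w assume w: "w \<in> V - {x, z}"
  show "E x w \<longleftrightarrow> E z w"
  proof (cases "w = y")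
    case False
    then show ?thesis using w assms(4,5) by (auto simp: twins_def)
  next
    case True
    show ?thesis
    proof (cases "x = z")
      case False
      then have "E x z \<longleftrightarrow> E y z" "E y x \<longleftrightarrow> E z x"
        using w True assms by (auto simp: twins_def)
      then show ?thesis
        using True graph_sym_iff[OF g, of x y] graph_sym_iff[OF g, of z y] graph_sym_iff[OF g, of x z]
        by simp
    qed simp
  qed
qed

lemma automorphism_cong:
  assumes "automorphism V E f" "\<And>v. v \<in> V \<Longrightarrow> f v = g v"
  shows "automorphism V E g"
  using assms bij_betw_cong[of V f g V] by (simp add: automorphism_def)

lemma automorphism_in_carrier: "automorphism V E f \<Longrightarrow> v \<in> V \<Longrightarrow> f v \<in> V"
  by (auto simp: automorphism_def bij_betw_def)

lemma automorphism_eq_iff: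
  "automorphism V E f \<Longrightarrow> u \<in> V \<Longrightarrow> v \<in> V \<Longrightarrow> f u = f v \<longleftrightarrow> u = v"
  by (auto simp: automorphism_def bij_betw_def inj_on_eq_iff)

lemma automorphism_edge:
  "automorphism V E f \<Longrightarrow> u \<in> V \<Longrightarrow> v \<in> V \<Longrightarrow> E (f u) (f v) \<longleftrightarrow> E u v"
  by (simp add: automorphism_def)

lemma automorphism_transpose_twins:
  assumes g: "graph V E" and "x \<in> V" "y \<in> V" and tw: "twins V E x y"
  shows "automorphism V E (transpose x y)"
  unfolding automorphism_def
proof (intro conjI ballI)
  show "bij_betw (transpose x y) V V" using assms by simp
  have sym: "E a b \<longleftrightarrow> E b a" for a b
    by (rule graph_sym_iff[OF g])
  have out: "E x w \<longleftrightarrow> E y w" if "w \<in> V - {x, y}" for w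
    using tw that by (simp add: twins_def)
  fix u v assume "u \<in> V" "v \<in> V"
  then show "E u v \<longleftrightarrow> E (transpose x y u) (transpose x y v)"
    using out[of u] out[of v] sym[of u x] sym[of u y] sym[of x y] graph_irrefl[OF g, of x]
      graph_irrefl[OF g, of y]
    by (cases "u = x \<or> u = y"; cases "v = x \<or> v = y") (auto simp: transpose_def)
qed

lemma twins_if_automorphism_moves_pair:
  assumes "automorphism V E f" "x \<in> V" "f x = y" "\<forall>w \<in> V - {x, y}. f w = w"
  shows "twins V E x y"
  unfolding twins_def
proof
  fix w assume "w \<in> V - {x, y}"
  then show "E x w \<longleftrightarrow> E y w"
    using assms automorphism_edge[OF assms(1) assms(2), of w] by auto
qed

lemma twins_if_automorphism_permutes_triple:
  assumes g: "graph V E" and f: "automorphism V E f" and V: "{a, b, z} \<subseteq> V"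
    and "distinct [a, b, z]" "f a = b" "f ` {a, b, z} \<subseteq> {a, b, z}" "\<forall>w \<in> V - {a, b, z}. f w = w"
  shows "twins V E a b"
proof -
  have edge_a: "E a w \<longleftrightarrow> E b (f w)" if "w \<in> V" for w
    using automorphism_edge[OF f, of a w] that V \<open>f a = b\<close> by simp
  have "E a z \<longleftrightarrow> E b z"
  proof (cases "f z = z")
    case True
    then show ?thesis using edge_a V by simp
  next
    case False
    have "f z \<noteq> b" "f b \<noteq> b" "f b \<noteq> f z"
      using V assms(4,5) automorphism_eq_iff[OF f, of z a] automorphism_eq_iff[OF f, of b a]
        automorphism_eq_iff[OF f, of b z] by auto
    then have "f z = a" "f b = z"
      using False assms(4-6) by auto
    \<comment> \<open>f is the 3-cycle (a b z); it carries the edge az to ba and ba to zb\<close>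
    then have "E a z \<longleftrightarrow> E b a" "E b a \<longleftrightarrow> E z b"
      using edge_a[of z] automorphism_edge[OF f, of b a] V \<open>f a = b\<close> by auto
    then show ?thesis using graph_sym_iff[OF g, of a b] graph_sym_iff[OF g, of z b] by simp
  qed
  moreover have "E a w \<longleftrightarrow> E b w" if "w \<in> V - {a, b, z}" for w
    using edge_a[of w] that assms(7) by simp
  ultimately show ?thesis
    unfolding twins_def by blast
qed

lemma automorphism_preserving_two_pairs:
  assumes f: "automorphism V E f" and T: "{a, b, c, d} \<subseteq> V" "distinct [a, b, c, d]"
    and out: "\<forall>w \<in> V - {a, b, c, d}. f w = w"
    and moves: "f a \<in> {a, b}" "f b \<in> {a, b}" "f c \<in> {c, d}" "f d \<in> {c, d}"
  shows "(\<forall>w \<in> {a, b, c, d}. f w = w) \<or> twins V E a b \<or> twins V E c d \<or>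
    automorphism V E (transpose a b \<circ> transpose c d)"
proof -
  have "f a \<noteq> f b" "f c \<noteq> f d"
    using T automorphism_eq_iff[OF f, of a b] automorphism_eq_iff[OF f, of c d] by auto
  show ?thesis
  proof (cases "f a = a"; cases "f c = c")
    assume "f a = a" "f c = c"
    then show ?thesis using moves \<open>f a \<noteq> f b\<close> \<open>f c \<noteq> f d\<close> by auto
  next
    assume "f a = a" "f c \<noteq> c"
    then have "f b = b" "f c = d" using moves \<open>f a \<noteq> f b\<close> by auto
    then have "\<forall>w \<in> V - {c, d}. f w = w" using out \<open>f a = a\<close> by blast
    then show ?thesis
      using twins_if_automorphism_moves_pair[OF f _ \<open>f c = d\<close>] T(1) by blast
  next
    assume "f a \<noteq> a" "f c = c"
    then have "f d = d" "f a = b" using moves \<open>f c \<noteq> f d\<close> by auto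
    then have "\<forall>w \<in> V - {a, b}. f w = w" using out \<open>f c = c\<close> by blast
    then show ?thesis
      using twins_if_automorphism_moves_pair[OF f _ \<open>f a = b\<close>] T(1) by blast
  next
    assume "f a \<noteq> a" "f c \<noteq> c"
    then have "f a = b" "f b = a" "f c = d" "f d = c"
      using moves \<open>f a \<noteq> f b\<close> \<open>f c \<noteq> f d\<close> by auto
    have "f v = (transpose a b \<circ> transpose c d) v" if "v \<in> V" for v
    proof (cases "v \<in> {a, b, c, d}")
      case True
      then show ?thesis
        using \<open>f a = b\<close> \<open>f b = a\<close> \<open>f c = d\<close> \<open>f d = c\<close> T(2) by (auto simp: transpose_def)
    next
      case False
      then show ?thesis using that out by (simp add: transpose_def)
    qed
    then show ?thesis using automorphism_cong[OF f] by blast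
  qed
qed

section \<open>Distinguishing colourings\<close>

lemma distinguishing_coloring_mono:
  "distinguishing_coloring V E k c \<Longrightarrow> k \<le> k' \<Longrightarrow> distinguishing_coloring V E k' c"
  unfolding distinguishing_coloring_def by auto

lemma not_distinguishing_coloring_0: "V \<noteq> {} \<Longrightarrow> \<not> distinguishing_coloring V E 0 c"
  unfolding distinguishing_coloring_def by auto

lemma distinguishing_coloringD:
  "distinguishing_coloring V E k c \<Longrightarrow> automorphism V E f \<Longrightarrow> \<forall>w\<in>V. c (f w) = c w \<Longrightarrow>
    v \<in> V \<Longrightarrow> f v = v"
  unfolding distinguishing_coloring_def by blast

lemma ex_distinguishing_coloring_of_map:
  assumes "finite V" and "card (g ` V) \<le> k"
    and rigid: "\<And>f. automorphism V E f \<Longrightarrow> \<forall>v\<in>V. g (f v) = g v \<Longrightarrow> \<forall>v\<in>V. f v = v"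
  shows "\<exists>c. distinguishing_coloring V E k c"
proof -
  obtain h where h: "bij_betw h (g ` V) {..<card (g ` V)}"
    using ex_bij_betw_finite_nat[of "g ` V"] \<open>finite V\<close> by (auto simp: atLeast0LessThan)
  have "distinguishing_coloring V E k (h \<circ> g)"
    unfolding distinguishing_coloring_def
  proof (intro conjI allI impI)
    have "(h \<circ> g) ` V = {..<card (g ` V)}"
      using h by (simp add: bij_betw_def image_comp)
    then show "(h \<circ> g) ` V \<subseteq> {..<k}"
      using \<open>card (g ` V) \<le> k\<close> by auto
    fix f assume f: "automorphism V E f \<and> (\<forall>v\<in>V. (h \<circ> g) (f v) = (h \<circ> g) v)"
    have "g (f v) = g v" if "v \<in> V" for v
      using f that automorphism_in_carrier[of V E f v] h
      by (auto simp: bij_betw_def inj_on_eq_iff)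
    then show "\<forall>v\<in>V. f v = v" using rigid f by blast
  qed
  then show ?thesis by blast
qed

lemma ex_distinguishing_coloring_card:
  "finite V \<Longrightarrow> \<exists>c. distinguishing_coloring V E (card V) c"
  by (rule ex_distinguishing_coloring_of_map[where g = id]) auto

lemma distinguishing_number_eq_iff:
  assumes "finite V"
  shows "distinguishing_number V E = k \<longleftrightarrow>
    (\<exists>c. distinguishing_coloring V E k c) \<and> (0 < k \<longrightarrow> \<not> (\<exists>c. distinguishing_coloring V E (k - 1) c))"
proof
  assume k: "distinguishing_number V E = k"
  have "\<exists>c. distinguishing_coloring V E (distinguishing_number V E) c"
    unfolding distinguishing_number_def
    by (rule LeastI_ex) (use ex_distinguishing_coloring_card[OF assms] in blast)
  moreover have "\<not> (\<exists>c. distinguishing_coloring V E (k - 1) c)" if "0 < k"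
    using not_less_Least[of "k - 1" "\<lambda>k. \<exists>c. distinguishing_coloring V E k c"] k that
    unfolding distinguishing_number_def by simp
  ultimately show "(\<exists>c. distinguishing_coloring V E k c) \<and>
    (0 < k \<longrightarrow> \<not> (\<exists>c. distinguishing_coloring V E (k - 1) c))"
    using k by simp
next
  assume k: "(\<exists>c. distinguishing_coloring V E k c) \<and>
    (0 < k \<longrightarrow> \<not> (\<exists>c. distinguishing_coloring V E (k - 1) c))"
  show "distinguishing_number V E = k"
    unfolding distinguishing_number_def
  proof (rule Least_equality)
    show "\<exists>c. distinguishing_coloring V E k c" using k by blast
    fix k' assume "\<exists>c. distinguishing_coloring V E k' c"
    then obtain c where c: "distinguishing_coloring V E k' c" by blast
    show "k \<le> k'"
    proof (rule ccontr)
      assume "\<not> k \<le> k'"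
      then have "distinguishing_coloring V E (k - 1) c"
        using distinguishing_coloring_mono[OF c] by simp
      then show False using k \<open>\<not> k \<le> k'\<close> by auto
    qed
  qed
qed

lemma int_distinguishing_number_eq_card_minus_one_iff:
  assumes "finite V"
  shows "int (distinguishing_number V E) = int (card V) - 1 \<longleftrightarrow>
    (\<exists>c. distinguishing_coloring V E (card V - 1) c) \<and>
    \<not> (\<exists>c. distinguishing_coloring V E (card V - 2) c)"
proof (cases "card V")
  case 0
  then show ?thesis by auto
next
  case (Suc m)
  then have "V \<noteq> {}" by auto
  then have "int (distinguishing_number V E) = int (card V) - 1 \<longleftrightarrow> distinguishing_number V E = m"
    using Suc by auto
  also have "\<dots> \<longleftrightarrow> (\<exists>c. distinguishing_coloring V E m c) \<and>
      \<not> (\<exists>c. distinguishing_coloring V E (m - 1) c)"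
    using distinguishing_number_eq_iff[OF assms, of E m] not_distinguishing_coloring_0[OF \<open>V \<noteq> {}\<close>]
    by (cases m) auto
  finally show ?thesis using Suc by (simp add: numeral_2_eq_2)
qed

text \<open>The colouring is g itself: the identity off T, merging T into g ` T, hence it uses
  card V - card T + card (g ` T) colours.\<close>
lemma ex_distinguishing_coloring_of_collapse:
  assumes "finite V" "T \<subseteq> V" and fix_out: "\<forall>w \<in> V - T. g w = w" and "g ` T \<subseteq> T"
    and "card V + card (g ` T) \<le> k + card T"
    and rigid: "\<And>f. automorphism V E f \<Longrightarrow> \<forall>w \<in> V - T. f w = w \<Longrightarrow>
      \<forall>w \<in> T. f w \<in> T \<and> g (f w) = g w \<Longrightarrow> \<forall>w \<in> T. f w = w"
  shows "\<exists>c. distinguishing_coloring V E k c"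
proof (rule ex_distinguishing_coloring_of_map[OF \<open>finite V\<close>])
  have "g ` V \<subseteq> (V - T) \<union> g ` T" using fix_out by force
  then have "card (g ` V) \<le> card (V - T) + card (g ` T)"
    using assms(1,2) card_Un_le[of "V - T" "g ` T"] card_mono[of "(V - T) \<union> g ` T" "g ` V"]
    by (meson finite_Diff finite_Un finite_imageI finite_subset le_trans)
  then show "card (g ` V) \<le> k"
    using assms(1,2,5) card_Diff_subset[of T V] card_mono[of V T] finite_subset[of T V] by linarith
next
  fix f assume f: "automorphism V E f" and pres: "\<forall>v\<in>V. g (f v) = g v"
  have out: "\<forall>w \<in> V - T. f w = w"
  proof
    fix w assume w: "w \<in> V - T"
    then have "g (f w) = w" using pres fix_out by simp
    moreover have "f w \<in> V" using automorphism_in_carrier[OF f, of w] w by simp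
    moreover have "f w \<notin> T"
    proof
      assume "f w \<in> T"
      then have "g (f w) \<in> T" using \<open>g ` T \<subseteq> T\<close> by blast
      then show False using \<open>g (f w) = w\<close> w by simp
    qed
    ultimately show "f w = w" using fix_out by simp
  qed
  have "f w \<in> T" if "w \<in> T" for w
  proof (rule ccontr)
    assume "f w \<notin> T"
    moreover have "f w \<in> V" using automorphism_in_carrier[OF f, of w] that \<open>T \<subseteq> V\<close> by blast
    ultimately have "g (f w) = f w" using fix_out by simp
    moreover have "g (f w) = g w" using pres that \<open>T \<subseteq> V\<close> by blast
    ultimately have "g w \<notin> T" using \<open>f w \<notin> T\<close> by simp
    then show False using that \<open>g ` T \<subseteq> T\<close> by blast
  qed
  then have "\<forall>w \<in> T. f w \<in> T \<and> g (f w) = g w"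
    using pres \<open>T \<subseteq> V\<close> by auto
  then have "\<forall>w \<in> T. f w = w" by (rule rigid[OF f out])
  then show "\<forall>v\<in>V. f v = v" using out by auto
qed

lemma distinguishing_coloring_not_twins:
  assumes "graph V E" "distinguishing_coloring V E k c"
    and "u \<in> V" "v \<in> V" "u \<noteq> v" "c u = c v"
  shows "\<not> twins V E u v"
proof
  assume "twins V E u v"
  then have "automorphism V E (transpose u v)"
    by (rule automorphism_transpose_twins[OF assms(1,3,4)])
  moreover have "\<forall>w\<in>V. c (transpose u v w) = c w"
    using \<open>c u = c v\<close> by (simp add: transpose_def)
  ultimately have "transpose u v u = u"
    by (rule distinguishing_coloringD[OF assms(2) _ _ assms(3)])
  then show False using \<open>u \<noteq> v\<close> by simp
qed

lemma distinguishing_coloring_inj_on_twins: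
  assumes "graph V E" "distinguishing_coloring V E k c" "C \<subseteq> V" "\<forall>p\<in>C. \<forall>q\<in>C. twins V E p q"
  shows "inj_on c C"
  using distinguishing_coloring_not_twins[OF assms(1,2)] assms(3,4) by (meson inj_onI subsetD)

lemma ex_distinguishing_coloring_card_minus_one_iff:
  assumes g: "graph V E" and "V \<noteq> {}"
  shows "(\<exists>c. distinguishing_coloring V E (card V - 1) c) \<longleftrightarrow> (\<exists>u\<in>V. \<exists>v\<in>V. \<not> twins V E u v)"
proof
  assume "\<exists>c. distinguishing_coloring V E (card V - 1) c"
  then obtain c where c: "distinguishing_coloring V E (card V - 1) c" by blast
  then have "card (c ` V) \<le> card V - 1"
    using card_mono[of "{..<card V - 1}" "c ` V"] by (simp add: distinguishing_coloring_def)
  moreover have "0 < card V"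
    using graph_finite[OF g] \<open>V \<noteq> {}\<close> by (simp add: card_gt_0_iff)
  ultimately have "\<not> inj_on c V"
    using card_image[of c V] by linarith
  then obtain u v where "u \<in> V" "v \<in> V" "u \<noteq> v" "c u = c v"
    unfolding inj_on_def by blast
  then show "\<exists>u\<in>V. \<exists>v\<in>V. \<not> twins V E u v"
    using distinguishing_coloring_not_twins[OF g c] by metis
next
  assume "\<exists>u\<in>V. \<exists>v\<in>V. \<not> twins V E u v"
  then obtain u v where uv: "u \<in> V" "v \<in> V" and nt: "\<not> twins V E u v" by blast
  have "u \<noteq> v" using nt twins_refl by metis
  show "\<exists>c. distinguishing_coloring V E (card V - 1) c"
  proof (rule ex_distinguishing_coloring_of_collapse[where T = "{u, v}" and g = "\<lambda>w. if w = v then u else w"])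
    show "card V + card ((\<lambda>w. if w = v then u else w) ` {u, v}) \<le> card V - 1 + card {u, v}"
      using \<open>u \<noteq> v\<close> \<open>V \<noteq> {}\<close> graph_finite[OF g] by (simp add: card_gt_0_iff Suc_leI)
    fix f assume f: "automorphism V E f" and out: "\<forall>w\<in>V - {u, v}. f w = w"
      and "\<forall>w\<in>{u, v}. f w \<in> {u, v} \<and> (if f w = v then u else f w) = (if w = v then u else w)"
    then have "f u \<in> {u, v}" "f v \<in> {u, v}" by simp_all
    moreover have "f u \<noteq> v"
      using twins_if_automorphism_moves_pair[OF f \<open>u \<in> V\<close> _ out] nt by blast
    moreover have "f u \<noteq> f v"
      using automorphism_eq_iff[OF f uv] \<open>u \<noteq> v\<close> by simp
    ultimately show "\<forall>w\<in>{u, v}. f w = w" by auto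
  qed (use uv graph_finite[OF g] in auto)
qed

lemma twins_among_three:
  assumes g: "graph V E" and no: "\<nexists>c. distinguishing_coloring V E (card V - 2) c"
    and T: "{x, y, z} \<subseteq> V" "distinct [x, y, z]"
  shows "twins V E x y \<or> twins V E y z \<or> twins V E x z"
proof (rule ccontr)
  assume nt: "\<not> (twins V E x y \<or> twins V E y z \<or> twins V E x z)"
  have "\<exists>c. distinguishing_coloring V E (card V - 2) c"
  proof (rule ex_distinguishing_coloring_of_collapse[where T = "{x, y, z}"
        and g = "\<lambda>w. if w \<in> {x, y, z} then x else w"])
    have "card {x, y, z} \<le> card V" using card_mono[OF graph_finite[OF g] T(1)] .
    then show "card V + card ((\<lambda>w. if w \<in> {x, y, z} then x else w) ` {x, y, z})
        \<le> card V - 2 + card {x, y, z}"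
      using T(2) by simp
    fix f assume f: "automorphism V E f" and out: "\<forall>w \<in> V - {x, y, z}. f w = w"
      and pres: "\<forall>w \<in> {x, y, z}. f w \<in> {x, y, z} \<and> (if f w \<in> {x, y, z} then x else f w) =
        (if w \<in> {x, y, z} then x else w)"
    have into: "f ` {x, y, z} \<subseteq> {x, y, z}" using pres by blast
    show "\<forall>w \<in> {x, y, z}. f w = w"
    proof (rule ccontr)
      assume "\<not> (\<forall>w \<in> {x, y, z}. f w = w)"
      then obtain a where a: "a \<in> {x, y, z}" "f a \<noteq> a" by blast
      moreover have "f a \<in> {x, y, z}" using into a by blast
      ultimately obtain t where t: "t \<in> {x, y, z}" "t \<noteq> a" "t \<noteq> f a"
        using T(2) by auto
      have eq: "{a, f a, t} = {x, y, z}"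
        using a t \<open>f a \<in> {x, y, z}\<close> T(2) by auto
      have "twins V E a (f a)"
      proof (rule twins_if_automorphism_permutes_triple[OF g f])
        show "{a, f a, t} \<subseteq> V" unfolding eq by (rule T(1))
        show "distinct [a, f a, t]" using a(2) t by auto
        show "f ` {a, f a, t} \<subseteq> {a, f a, t}" unfolding eq by (rule into)
        show "\<forall>w \<in> V - {a, f a, t}. f w = w" unfolding eq by (rule out)
      qed simp
      then show False
        using nt a \<open>f a \<in> {x, y, z}\<close> by (auto simp: twins_commute)
    qed
  qed (use T graph_finite[OF g] in auto)
  with no show False by blast
qed

lemma twins_or_automorphism_double_transposition:
  assumes g: "graph V E" and no: "\<nexists>c. distinguishing_coloring V E (card V - 2) c"
    and T: "{a, b, c, d} \<subseteq> V" "distinct [a, b, c, d]"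
  shows "twins V E a b \<or> twins V E c d \<or> automorphism V E (transpose a b \<circ> transpose c d)"
proof (rule ccontr)
  assume nt: "\<not> (twins V E a b \<or> twins V E c d \<or> automorphism V E (transpose a b \<circ> transpose c d))"
  let ?g = "\<lambda>w. if w = b then a else if w = d then c else w"
  have "\<exists>col. distinguishing_coloring V E (card V - 2) col"
  proof (rule ex_distinguishing_coloring_of_collapse[where T = "{a, b, c, d}" and g = ?g])
    have "card {a, b, c, d} \<le> card V" using card_mono[OF graph_finite[OF g] T(1)] .
    moreover have img: "?g ` {a, b, c, d} = {a, c}"
      using T(2) by auto
    ultimately show "card V + card (?g ` {a, b, c, d}) \<le> card V - 2 + card {a, b, c, d}"
      unfolding img using T(2) by simp
    fix f assume f: "automorphism V E f" and out: "\<forall>w \<in> V - {a, b, c, d}. f w = w"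
      and pres: "\<forall>w \<in> {a, b, c, d}. f w \<in> {a, b, c, d} \<and> ?g (f w) = ?g w"
    have "f a \<in> {a, b}" using bspec[OF pres, of a] T(2) by auto
    moreover have "f b \<in> {a, b}" using bspec[OF pres, of b] T(2) by auto
    moreover have "f c \<in> {c, d}" using bspec[OF pres, of c] T(2) by auto
    moreover have "f d \<in> {c, d}" using bspec[OF pres, of d] T(2) by auto
    ultimately show "\<forall>w \<in> {a, b, c, d}. f w = w"
      using automorphism_preserving_two_pairs[OF f T out] nt by simp
  qed (use T graph_finite[OF g] in auto)
  with no show False by blast
qed

section \<open>Two-block graphs\<close>

definition two_block_graph ::
  "'a set \<Rightarrow> ('a \<Rightarrow> 'a \<Rightarrow> bool) \<Rightarrow> 'a set \<Rightarrow> bool \<Rightarrow> bool \<Rightarrow> bool \<Rightarrow> bool" where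
  "two_block_graph V E A \<alpha> \<beta> \<gamma> \<longleftrightarrow> A \<subseteq> V \<and> (\<forall>u\<in>V. \<forall>v\<in>V. E u v \<longleftrightarrow>
     u \<noteq> v \<and> (if u \<in> A \<and> v \<in> A then \<alpha> else if u \<notin> A \<and> v \<notin> A then \<beta> else \<gamma>))"

lemma two_block_graph_edge:
  "two_block_graph V E A \<alpha> \<beta> \<gamma> \<Longrightarrow> u \<in> V \<Longrightarrow> v \<in> V \<Longrightarrow>
    E u v \<longleftrightarrow> u \<noteq> v \<and> (if u \<in> A \<and> v \<in> A then \<alpha> else if u \<notin> A \<and> v \<notin> A then \<beta> else \<gamma>)"
  by (simp add: two_block_graph_def)

lemma two_block_graph_subset: "two_block_graph V E A \<alpha> \<beta> \<gamma> \<Longrightarrow> A \<subseteq> V"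
  by (simp add: two_block_graph_def)

lemma two_block_graph_complement:
  assumes "two_block_graph V E A \<alpha> \<beta> \<gamma>"
  shows "two_block_graph V E (V - A) \<beta> \<alpha> \<gamma>"
  unfolding two_block_graph_def
proof (intro conjI ballI)
  fix u v assume "u \<in> V" "v \<in> V"
  then show "E u v \<longleftrightarrow> u \<noteq> v \<and>
      (if u \<in> V - A \<and> v \<in> V - A then \<beta> else if u \<notin> V - A \<and> v \<notin> V - A then \<alpha> else \<gamma>)"
    using two_block_graph_edge[OF assms, of u v] by auto
qed blast

lemma two_block_graph_singleton_complement:
  assumes "two_block_graph V E A \<alpha> \<beta> \<gamma>" "card (V - A) = 1"
  shows "two_block_graph V E A \<alpha> \<beta>' \<gamma>"
proof -
  obtain b where b: "V - A = {b}" using assms(2) by (auto simp: card_1_singleton_iff)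
  show ?thesis
    unfolding two_block_graph_def
  proof (intro conjI ballI)
    show "A \<subseteq> V" using two_block_graph_subset[OF assms(1)] .
    fix u v assume "u \<in> V" "v \<in> V"
    moreover have "u \<in> A \<or> v \<in> A \<or> u = v"
      using b \<open>u \<in> V\<close> \<open>v \<in> V\<close> by (metis DiffI singletonD)
    ultimately show "E u v \<longleftrightarrow> u \<noteq> v \<and>
        (if u \<in> A \<and> v \<in> A then \<alpha> else if u \<notin> A \<and> v \<notin> A then \<beta>' else \<gamma>)"
      using two_block_graph_edge[OF assms(1), of u v] by auto
  qed
qed

lemma two_block_graph_twins:
  assumes "two_block_graph V E A \<alpha> \<beta> \<gamma>" "u \<in> V" "v \<in> V" "u \<in> A \<longleftrightarrow> v \<in> A"
  shows "twins V E u v"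
  unfolding twins_def
proof
  fix w assume "w \<in> V - {u, v}"
  then show "E u w \<longleftrightarrow> E v w"
    using two_block_graph_edge[OF assms(1)] assms(2-4) by auto
qed

lemma two_block_graph_not_twins_iff:
  assumes "finite V" and G: "two_block_graph V E A \<alpha> \<beta> \<gamma>" and "u \<in> A" "v \<in> V - A"
  shows "\<not> twins V E u v \<longleftrightarrow> 2 \<le> card A \<and> \<alpha> \<noteq> \<gamma> \<or> 2 \<le> card (V - A) \<and> \<beta> \<noteq> \<gamma>"
proof -
  have "A \<subseteq> V" using two_block_graph_subset[OF G] .
  have "(E u x \<longleftrightarrow> E v x) \<longleftrightarrow> \<not> (x \<in> A \<and> \<alpha> \<noteq> \<gamma> \<or> x \<notin> A \<and> \<beta> \<noteq> \<gamma>)"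
    if "x \<in> V - {u, v}" for x
    using two_block_graph_edge[OF G, of u x] two_block_graph_edge[OF G, of v x] that
      \<open>u \<in> A\<close> \<open>v \<in> V - A\<close> \<open>A \<subseteq> V\<close> by auto
  then have "\<not> twins V E u v \<longleftrightarrow> (\<exists>x \<in> V - {u, v}. x \<in> A \<and> \<alpha> \<noteq> \<gamma> \<or> x \<notin> A \<and> \<beta> \<noteq> \<gamma>)"
    unfolding twins_def by simp
  also have "\<dots> \<longleftrightarrow> (\<exists>x \<in> A. x \<noteq> u) \<and> \<alpha> \<noteq> \<gamma> \<or> (\<exists>x \<in> V - A. x \<noteq> v) \<and> \<beta> \<noteq> \<gamma>"
    using \<open>A \<subseteq> V\<close> assms(3,4) by blast
  also have "\<dots> \<longleftrightarrow> 2 \<le> card A \<and> \<alpha> \<noteq> \<gamma> \<or> 2 \<le> card (V - A) \<and> \<beta> \<noteq> \<gamma>"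
    using two_le_card_iff_ex_other[of A u] two_le_card_iff_ex_other[of "V - A" v] assms(1,3,4)
      finite_subset[OF \<open>A \<subseteq> V\<close>] by simp
  finally show ?thesis .
qed

lemma automorphism_swapping_blocks:
  assumes "two_block_graph V E A \<alpha> \<alpha> \<gamma>" "bij_betw f V V" "\<forall>v\<in>V. f v \<in> A \<longleftrightarrow> v \<notin> A"
  shows "automorphism V E f"
  unfolding automorphism_def
proof (intro conjI ballI)
  show "bij_betw f V V" by fact
  fix u v assume uv: "u \<in> V" "v \<in> V"
  then have "f u \<in> V" "f v \<in> V" "f u = f v \<longleftrightarrow> u = v"
    using assms(2) by (auto simp: bij_betw_def inj_on_eq_iff)
  then show "E u v \<longleftrightarrow> E (f u) (f v)"
    using two_block_graph_edge[OF assms(1)] uv assms(3) by auto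
qed

lemma two_block_graph_isomorphic:
  assumes "finite V" "finite W" and G: "two_block_graph V E A \<alpha> \<beta> \<gamma>" and H: "two_block_graph W F B \<alpha> \<beta> \<gamma>"
    and "card A = card B" "card (V - A) = card (W - B)"
  shows "isomorphic V E W F"
proof -
  have "A \<subseteq> V" "B \<subseteq> W" using G H by (simp_all add: two_block_graph_subset)
  obtain hA where hA: "bij_betw hA A B"
    using finite_same_card_bij assms \<open>A \<subseteq> V\<close> \<open>B \<subseteq> W\<close> finite_subset by metis
  obtain hB where hB: "bij_betw hB (V - A) (W - B)"
    using finite_same_card_bij assms by (metis finite_Diff)
  define h where "h v = (if v \<in> A then hA v else hB v)" for v
  have "bij_betw h A B" "bij_betw h (V - A) (W - B)"
    using hA hB bij_betw_cong[of A h hA B] bij_betw_cong[of "V - A" h hB "W - B"] by (simp_all add: h_def)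
  then have "bij_betw h (A \<union> (V - A)) (B \<union> (W - B))"
    by (rule bij_betw_combine) blast
  then have h: "bij_betw h V W"
    using \<open>A \<subseteq> V\<close> \<open>B \<subseteq> W\<close> by (simp add: Un_absorb1)
  have block: "h v \<in> B \<longleftrightarrow> v \<in> A" if "v \<in> V" for v
    using that hA hB by (auto simp: h_def bij_betw_def)
  have "E u v \<longleftrightarrow> F (h u) (h v)" if "u \<in> V" "v \<in> V" for u v
  proof -
    have "h u \<in> W" "h v \<in> W" "h u = h v \<longleftrightarrow> u = v"
      using h that by (auto simp: bij_betw_def inj_on_eq_iff)
    then show ?thesis
      using two_block_graph_edge[OF G that] two_block_graph_edge[OF H, of "h u" "h v"]
        block that by simp
  qed
  then show ?thesis using h by (auto simp: isomorphic_def)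
qed

lemma two_block_graph_isomorphic_transfer:
  assumes "isomorphic V E W F" and H: "two_block_graph W F B \<alpha> \<beta> \<gamma>"
  obtains A where "two_block_graph V E A \<alpha> \<beta> \<gamma>" "card A = card B" "card (V - A) = card (W - B)"
proof -
  obtain h where h: "bij_betw h V W" and iso: "\<forall>u\<in>V. \<forall>v\<in>V. E u v \<longleftrightarrow> F (h u) (h v)"
    using assms(1) by (auto simp: isomorphic_def)
  define A where "A = {v \<in> V. h v \<in> B}"
  have "two_block_graph V E A \<alpha> \<beta> \<gamma>"
    unfolding two_block_graph_def
  proof (intro conjI ballI)
    show "A \<subseteq> V" by (auto simp: A_def)
    fix u v assume uv: "u \<in> V" "v \<in> V"
    then have "h u \<in> W" "h v \<in> W" "h u = h v \<longleftrightarrow> u = v"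
      using h by (auto simp: bij_betw_def inj_on_eq_iff)
    then show "E u v \<longleftrightarrow>
        u \<noteq> v \<and> (if u \<in> A \<and> v \<in> A then \<alpha> else if u \<notin> A \<and> v \<notin> A then \<beta> else \<gamma>)"
      using iso two_block_graph_edge[OF H, of "h u" "h v"] uv by (simp add: A_def)
  qed
  moreover have "bij_betw h A B" "bij_betw h (V - A) (W - B)"
    using h two_block_graph_subset[OF H] by (auto simp: A_def bij_betw_def inj_on_def)
  ultimately show ?thesis using that bij_betw_same_card by blast
qed

lemma twin_class_edge_uniform:
  assumes g: "graph V E" and "C \<subseteq> V" and C: "\<forall>p\<in>C. \<forall>q\<in>C. twins V E p q"
    and "{x, y, x', y'} \<subseteq> C" "x \<noteq> y" "x' \<noteq> y'" "E x y"
  shows "E x' y'"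
proof -
  have sym: "E a b \<longleftrightarrow> E b a" for a b
    by (rule graph_sym_iff[OF g])
  have transfer: "E p w \<longleftrightarrow> E q w" if "p \<in> C" "q \<in> C" "w \<in> V - {p, q}" for p q w
    using C that unfolding twins_def by blast
  show ?thesis
  proof (cases "x' = y")
    case True
    then have "E x x' \<longleftrightarrow> E y' x'"
      using transfer[of x y' x'] assms(2,4-6) by auto
    then show ?thesis using True \<open>E x y\<close> sym by simp
  next
    case False
    then have "E x y \<longleftrightarrow> E x' y" "E y x' \<longleftrightarrow> E y' x'"
      using transfer[of x x' y] transfer[of y y' x'] assms(2,4-6) by auto
    then show ?thesis using \<open>E x y\<close> sym by simp
  qed
qed

lemma two_block_graph_of_twin_classes:
  assumes g: "graph V E" and "A \<subseteq> V"
    and twinsA: "\<forall>p\<in>A. \<forall>q\<in>A. twins V E p q" and twinsB: "\<forall>p\<in>V - A. \<forall>q\<in>V - A. twins V E p q"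
    and "u \<in> A" "v \<in> V - A"
  shows "\<exists>\<alpha> \<beta>. two_block_graph V E A \<alpha> \<beta> (E u v)"
proof -
  define \<alpha> where "\<alpha> \<longleftrightarrow> (\<exists>a\<in>A. \<exists>a'\<in>A. a \<noteq> a' \<and> E a a')"
  define \<beta> where "\<beta> \<longleftrightarrow> (\<exists>b\<in>V - A. \<exists>b'\<in>V - A. b \<noteq> b' \<and> E b b')"
  have sym: "E a b \<longleftrightarrow> E b a" for a b
    by (rule graph_sym_iff[OF g])
  have inA: "E p q \<longleftrightarrow> \<alpha>" if "p \<in> A" "q \<in> A" "p \<noteq> q" for p q
    using twin_class_edge_uniform[OF g \<open>A \<subseteq> V\<close> twinsA] that unfolding \<alpha>_def by blast
  have inB: "E p q \<longleftrightarrow> \<beta>" if "p \<in> V - A" "q \<in> V - A" "p \<noteq> q" for p q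
    using twin_class_edge_uniform[OF g _ twinsB] that unfolding \<beta>_def by blast
  have across: "E p q \<longleftrightarrow> E u v" if "p \<in> A" "q \<in> V - A" for p q
  proof -
    have "E p q \<longleftrightarrow> E u q" using twinsA that \<open>u \<in> A\<close> by (auto simp: twins_def)
    also have "\<dots> \<longleftrightarrow> E q u" by (rule sym)
    also have "\<dots> \<longleftrightarrow> E v u" using twinsB that \<open>u \<in> A\<close> \<open>v \<in> V - A\<close> \<open>A \<subseteq> V\<close>
      by (auto simp: twins_def)
    also have "\<dots> \<longleftrightarrow> E u v" by (rule sym)
    finally show ?thesis .
  qed
  have "two_block_graph V E A \<alpha> \<beta> (E u v)"
    unfolding two_block_graph_def
  proof (intro conjI ballI)
    fix p q assume "p \<in> V" "q \<in> V"
    then show "E p q \<longleftrightarrow>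
        p \<noteq> q \<and> (if p \<in> A \<and> q \<in> A then \<alpha> else if p \<notin> A \<and> q \<notin> A then \<beta> else E u v)"
      using inA[of p q] inB[of p q] across[of p q] across[of q p] sym[of p q] graph_irrefl[OF g, of p]
      by (cases "p = q") auto
  qed (rule \<open>A \<subseteq> V\<close>)
  then show ?thesis by blast
qed

lemma two_block_graph_of_twin_class:
  assumes g: "graph V E" and no: "\<nexists>c. distinguishing_coloring V E (card V - 2) c"
    and "u \<in> V" "v \<in> V" and nt: "\<not> twins V E u v"
  shows "\<exists>\<alpha> \<beta>. two_block_graph V E {w \<in> V. twins V E u w} \<alpha> \<beta> (E u v)"
proof -
  define A where "A = {w \<in> V. twins V E u w}"
  have "A \<subseteq> V" "u \<in> A" "v \<in> V - A"
    using \<open>u \<in> V\<close> \<open>v \<in> V\<close> nt twins_refl by (auto simp: A_def)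
  \<comment> \<open>among u, v and any w outside A two are twins, so w is a twin of v\<close>
  have twin_v: "twins V E v w" if "w \<in> V - A" for w
  proof (cases "w = v")
    case False
    then have "{u, v, w} \<subseteq> V" "distinct [u, v, w]"
      using that \<open>u \<in> A\<close> \<open>u \<in> V\<close> \<open>v \<in> V\<close> nt twins_refl by (auto simp: A_def)
    then show ?thesis
      using twins_among_three[OF g no] nt that by (auto simp: A_def)
  qed (simp add: twins_refl)
  have "twins V E p q" if "p \<in> A" "q \<in> A" for p q
    using twins_trans[OF g, of p q u] that by (auto simp: A_def twins_commute)
  moreover have "twins V E p q" if "p \<in> V - A" "q \<in> V - A" for p q
    using twins_trans[OF g, of p q v] twin_v that by (auto simp: twins_commute)
  ultimately show ?thesis
    using two_block_graph_of_twin_classes[OF g \<open>A \<subseteq> V\<close> _ _ \<open>u \<in> A\<close> \<open>v \<in> V - A\<close>]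
    unfolding A_def by blast
qed

lemma atLeast0LessThan_4: "{0..<4::nat} = {0, 1, 2, 3}"
  by auto

lemma two_block_graph_C4: "two_block_graph C4_V C4_E {0, 2} False False True"
  unfolding two_block_graph_def C4_V_def C4_E_def atLeast0LessThan_4 by auto

lemma two_block_graph_twoK2: "two_block_graph twoK2_V twoK2_E {0, 1} True True False"
  unfolding two_block_graph_def twoK2_V_def twoK2_E_def atLeast0LessThan_4
  by (auto simp: doubleton_eq_iff)

lemma two_block_graph_star: "two_block_graph (star_V t) (star_E t) {1..t} False False True"
  by (auto simp: two_block_graph_def star_V_def star_E_def)

lemma two_block_graph_cliqueK1: "two_block_graph (cliqueK1_V t) (cliqueK1_E t) {1..t} True False False"
  by (auto simp: two_block_graph_def cliqueK1_V_def cliqueK1_E_def)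

lemma finite_concrete_vertex_sets:
  "finite C4_V" "finite twoK2_V" "finite (star_V t)" "finite (cliqueK1_V t)"
  by (simp_all add: C4_V_def twoK2_V_def star_V_def cliqueK1_V_def)

lemma card_concrete_blocks:
  "card {0, 2::nat} = 2" "card (C4_V - {0, 2}) = 2"
  "card {0, 1::nat} = 2" "card (twoK2_V - {0, 1}) = 2"
  "card (star_V t - {1..t}) = 1" "card (cliqueK1_V t - {1..t}) = 1"
proof -
  have "C4_V - {0, 2} = {1, 3}" "twoK2_V - {0, 1} = {2, 3}"
    "star_V t - {1..t} = {0}" "cliqueK1_V t - {1..t} = {0}"
    by (auto simp: C4_V_def twoK2_V_def star_V_def cliqueK1_V_def)
  then show "card {0, 2::nat} = 2" "card (C4_V - {0, 2}) = 2"
    "card {0, 1::nat} = 2" "card (twoK2_V - {0, 1}) = 2"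
    "card (star_V t - {1..t}) = 1" "card (cliqueK1_V t - {1..t}) = 1"
    by simp_all
qed

section \<open>The exceptional graphs\<close>

text \<open>The first alternative gives C4 and 2K2, the second gives K_{t,1} and K_t \<union> K_1 with t = card A.\<close>
definition exceptional_graph :: "'a set \<Rightarrow> ('a \<Rightarrow> 'a \<Rightarrow> bool) \<Rightarrow> bool" where
  "exceptional_graph V E \<longleftrightarrow> (\<exists>A \<alpha> \<beta> \<gamma>. two_block_graph V E A \<alpha> \<beta> \<gamma> \<and> \<gamma> \<noteq> \<alpha> \<and>
     (card A = 2 \<and> card (V - A) = 2 \<and> \<beta> = \<alpha> \<or> 2 \<le> card A \<and> card (V - A) = 1))"

lemma exceptional_graphI:
  assumes "two_block_graph V E A \<alpha> \<beta> \<gamma>" "\<gamma> \<noteq> \<alpha>"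
    and "card A = 2 \<and> card (V - A) = 2 \<and> \<beta> = \<alpha> \<or> 2 \<le> card A \<and> card (V - A) = 1"
  shows "exceptional_graph V E"
  using assms unfolding exceptional_graph_def by blast

lemma exceptional_graph_isomorphic:
  assumes "isomorphic V E W F" "two_block_graph W F B \<alpha> \<beta> \<gamma>" "\<gamma> \<noteq> \<alpha>"
    and "card B = 2 \<and> card (W - B) = 2 \<and> \<beta> = \<alpha> \<or> 2 \<le> card B \<and> card (W - B) = 1"
  shows "exceptional_graph V E"
proof -
  obtain A where "two_block_graph V E A \<alpha> \<beta> \<gamma>" "card A = card B" "card (V - A) = card (W - B)"
    using two_block_graph_isomorphic_transfer[OF assms(1,2)] by blast
  then show ?thesis using exceptional_graphI assms(3,4) by metis
qed

lemma isomorphic_if_exceptional_graph: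
  assumes "finite V" "exceptional_graph V E"
  shows "isomorphic V E C4_V C4_E \<or> isomorphic V E twoK2_V twoK2_E \<or>
    (\<exists>t\<ge>2. isomorphic V E (star_V t) (star_E t)) \<or>
    (\<exists>t\<ge>2. isomorphic V E (cliqueK1_V t) (cliqueK1_E t))"
proof -
  obtain A \<alpha> \<beta> \<gamma> where G: "two_block_graph V E A \<alpha> \<beta> \<gamma>" and "\<gamma> \<noteq> \<alpha>"
    and cases: "card A = 2 \<and> card (V - A) = 2 \<and> \<beta> = \<alpha> \<or> 2 \<le> card A \<and> card (V - A) = 1"
    using assms(2) by (auto simp: exceptional_graph_def)
  from cases show ?thesis
  proof
    assume A: "card A = 2 \<and> card (V - A) = 2 \<and> \<beta> = \<alpha>"
    show ?thesis
    proof (cases \<alpha>)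
      case True
      then have "isomorphic V E twoK2_V twoK2_E"
        using two_block_graph_isomorphic[OF assms(1) finite_concrete_vertex_sets(2) _
            two_block_graph_twoK2] G A \<open>\<gamma> \<noteq> \<alpha>\<close> card_concrete_blocks by simp
      then show ?thesis by blast
    next
      case False
      then have "isomorphic V E C4_V C4_E"
        using two_block_graph_isomorphic[OF assms(1) finite_concrete_vertex_sets(1) _
            two_block_graph_C4] G A \<open>\<gamma> \<noteq> \<alpha>\<close> card_concrete_blocks by simp
      then show ?thesis by blast
    qed
  next
    assume A: "2 \<le> card A \<and> card (V - A) = 1"
    then have G': "two_block_graph V E A \<alpha> False \<gamma>"
      using two_block_graph_singleton_complement[OF G] by blast
    show ?thesis
    proof (cases \<alpha>)
      case True
      then have "isomorphic V E (cliqueK1_V (card A)) (cliqueK1_E (card A))"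
        using two_block_graph_isomorphic[OF assms(1) finite_concrete_vertex_sets(4) _
            two_block_graph_cliqueK1] G' A \<open>\<gamma> \<noteq> \<alpha>\<close> card_concrete_blocks by simp
      then show ?thesis using A by blast
    next
      case False
      then have "isomorphic V E (star_V (card A)) (star_E (card A))"
        using two_block_graph_isomorphic[OF assms(1) finite_concrete_vertex_sets(3) _
            two_block_graph_star] G' A \<open>\<gamma> \<noteq> \<alpha>\<close> card_concrete_blocks by simp
      then show ?thesis using A by blast
    qed
  qed
qed

lemma exceptional_graph_iff_isomorphic:
  assumes "finite V"
  shows "exceptional_graph V E \<longleftrightarrow>
    isomorphic V E C4_V C4_E \<or> isomorphic V E twoK2_V twoK2_E \<or>
    (\<exists>t\<ge>2. isomorphic V E (star_V t) (star_E t)) \<or>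
    (\<exists>t\<ge>2. isomorphic V E (cliqueK1_V t) (cliqueK1_E t))"
  (is "_ \<longleftrightarrow> ?C4 \<or> ?twoK2 \<or> ?star \<or> ?clique")
proof
  show "exceptional_graph V E \<Longrightarrow> ?C4 \<or> ?twoK2 \<or> ?star \<or> ?clique"
    by (rule isomorphic_if_exceptional_graph[OF assms])
next
  assume "?C4 \<or> ?twoK2 \<or> ?star \<or> ?clique"
  then show "exceptional_graph V E"
  proof (elim disjE exE conjE)
    assume ?C4
    then show ?thesis
      using exceptional_graph_isomorphic[OF _ two_block_graph_C4] card_concrete_blocks by simp
  next
    assume ?twoK2
    then show ?thesis
      using exceptional_graph_isomorphic[OF _ two_block_graph_twoK2] card_concrete_blocks by simp
  next
    fix t :: nat assume "2 \<le> t" "isomorphic V E (star_V t) (star_E t)"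
    then show ?thesis
      using exceptional_graph_isomorphic[OF _ two_block_graph_star] card_concrete_blocks by simp
  next
    fix t :: nat assume "2 \<le> t" "isomorphic V E (cliqueK1_V t) (cliqueK1_E t)"
    then show ?thesis
      using exceptional_graph_isomorphic[OF _ two_block_graph_cliqueK1] card_concrete_blocks by simp
  qed
qed

lemma two_block_graph_2_2_not_distinguishing:
  assumes G: "two_block_graph V E A \<alpha> \<alpha> \<gamma>" and "card A = 2" "card (V - A) = 2"
    and "c ` V \<subseteq> {..<2}" "inj_on c A" "inj_on c (V - A)"
  shows "\<not> distinguishing_coloring V E k c"
proof
  assume dc: "distinguishing_coloring V E k c"
  obtain a a' where A: "A = {a, a'}" "a \<noteq> a'" using \<open>card A = 2\<close> card_2_iff by metis
  obtain b0 b1 where B: "V - A = {b0, b1}" "b0 \<noteq> b1" using \<open>card (V - A) = 2\<close> card_2_iff by metis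
  have "A \<subseteq> V" using two_block_graph_subset[OF G] .
  have "c a \<noteq> c a'" "c b0 \<noteq> c b1"
    using A B \<open>inj_on c A\<close> \<open>inj_on c (V - A)\<close> by (auto simp: inj_on_def)
  moreover have "c a < 2" "c a' < 2" "c b0 < 2" "c b1 < 2"
    using \<open>c ` V \<subseteq> {..<2}\<close> A B \<open>A \<subseteq> V\<close> by auto
  \<comment> \<open>with only two colours available, the colours of one block are those of the other\<close>
  ultimately obtain b b' where B': "V - A = {b, b'}" "b \<noteq> b'" "c b = c a" "c b' = c a'"
    using B by (metis insert_commute less_2_cases)
  define f where "f = transpose a b \<circ> transpose a' b'"
  have V: "V = {a, a', b, b'}" using A B' \<open>A \<subseteq> V\<close> by auto
  have dist: "distinct [a, a', b, b']" using A B' by auto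
  have f: "f a = b" "f a' = b'" "f b = a" "f b' = a'"
    using dist by (auto simp: f_def transpose_def)
  have "bij_betw f V V"
    unfolding f_def by (rule bij_betw_trans[where B = V]) (simp_all add: V)
  moreover have "\<forall>v\<in>V. f v \<in> A \<longleftrightarrow> v \<notin> A"
    using V f A dist by auto
  ultimately have "automorphism V E f"
    by (rule automorphism_swapping_blocks[OF G])
  moreover have "\<forall>v\<in>V. c (f v) = c v"
    using V f B' by auto
  ultimately have "f a = a"
    by (rule distinguishing_coloringD[OF dc]) (use V in blast)
  then show False using f dist by simp
qed

lemma exceptional_graph_no_distinguishing_coloring:
  assumes g: "graph V E" and "exceptional_graph V E"
  shows "\<nexists>c. distinguishing_coloring V E (card V - 2) c"
proof
  assume "\<exists>c. distinguishing_coloring V E (card V - 2) c"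
  then obtain c where dc: "distinguishing_coloring V E (card V - 2) c" by blast
  obtain A \<alpha> \<beta> \<gamma> where G: "two_block_graph V E A \<alpha> \<beta> \<gamma>"
    and cases: "card A = 2 \<and> card (V - A) = 2 \<and> \<beta> = \<alpha> \<or> 2 \<le> card A \<and> card (V - A) = 1"
    using assms(2) by (auto simp: exceptional_graph_def)
  have "A \<subseteq> V" using two_block_graph_subset[OF G] .
  have "finite V" using graph_finite[OF g] .
  have "inj_on c A"
    by (rule distinguishing_coloring_inj_on_twins[OF g dc \<open>A \<subseteq> V\<close>])
      (use two_block_graph_twins[OF G] \<open>A \<subseteq> V\<close> in blast)
  have "inj_on c (V - A)"
    by (rule distinguishing_coloring_inj_on_twins[OF g dc Diff_subset])
      (use two_block_graph_twins[OF G] in blast)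
  have colours: "c ` V \<subseteq> {..<card V - 2}"
    using dc by (simp add: distinguishing_coloring_def)
  have "card V = card A + card (V - A)"
    using card_Diff_subset[OF _ \<open>A \<subseteq> V\<close>] card_mono[OF \<open>finite V\<close> \<open>A \<subseteq> V\<close>]
      finite_subset[OF \<open>A \<subseteq> V\<close> \<open>finite V\<close>] by simp
  from cases show False
  proof
    assume "card A = 2 \<and> card (V - A) = 2 \<and> \<beta> = \<alpha>"
    then show False
      using two_block_graph_2_2_not_distinguishing[of V E A \<alpha> \<gamma> c] G colours dc
        \<open>inj_on c A\<close> \<open>inj_on c (V - A)\<close> \<open>card V = card A + card (V - A)\<close> by auto
  next
    assume "2 \<le> card A \<and> card (V - A) = 1"
    moreover have "card A \<le> card (c ` V)"
      using card_image[OF \<open>inj_on c A\<close>] card_mono[of "c ` V" "c ` A"] \<open>finite V\<close> \<open>A \<subseteq> V\<close>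
      by (simp add: image_mono)
    moreover have "card (c ` V) \<le> card V - 2"
      using card_mono[OF _ colours] by simp
    ultimately show False using \<open>card V = card A + card (V - A)\<close> by linarith
  qed
qed

lemma exceptional_graph_ex_distinguishing_coloring:
  assumes g: "graph V E" and "exceptional_graph V E"
  shows "\<exists>c. distinguishing_coloring V E (card V - 1) c"
proof -
  obtain A \<alpha> \<beta> \<gamma> where G: "two_block_graph V E A \<alpha> \<beta> \<gamma>" and "\<gamma> \<noteq> \<alpha>"
    and cases: "card A = 2 \<and> card (V - A) = 2 \<and> \<beta> = \<alpha> \<or> 2 \<le> card A \<and> card (V - A) = 1"
    using assms(2) by (auto simp: exceptional_graph_def)
  have "card A \<noteq> 0" "card (V - A) \<noteq> 0" using cases by auto
  then have "A \<noteq> {}" "V - A \<noteq> {}" by (metis card.empty)+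
  then obtain u v where "u \<in> A" "v \<in> V - A" by blast
  then have "\<not> twins V E u v"
    using two_block_graph_not_twins_iff[OF graph_finite[OF g] G] cases \<open>\<gamma> \<noteq> \<alpha>\<close> by force
  moreover have "u \<in> V" "v \<in> V" "V \<noteq> {}"
    using \<open>u \<in> A\<close> \<open>v \<in> V - A\<close> two_block_graph_subset[OF G] by auto
  ultimately show ?thesis
    using ex_distinguishing_coloring_card_minus_one_iff[OF g] by blast
qed

lemma two_block_graph_double_transposition:
  assumes G: "two_block_graph V E A \<alpha> \<beta> \<gamma>" and f: "automorphism V E (transpose u v \<circ> transpose a b)"
    and A: "u \<in> A" "a \<in> A" "u \<noteq> a" and B: "v \<in> V - A" "b \<in> V - A" "v \<noteq> b"
    and ne: "\<alpha> \<noteq> \<gamma> \<or> \<beta> \<noteq> \<gamma>"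
  shows "\<alpha> = \<beta> \<and> A = {u, a} \<and> V - A = {v, b}"
proof -
  have "A \<subseteq> V" using two_block_graph_subset[OF G] .
  then have "u \<in> V" "a \<in> V" using A by auto
  have dist: "distinct [u, v, a, b]" using A B by auto
  have edge: "E u x \<longleftrightarrow> E v (transpose u v (transpose a b x))" if "x \<in> V" for x
    using automorphism_edge[OF f \<open>u \<in> V\<close> that] dist by (simp add: transpose_def)
  have "E u a \<longleftrightarrow> E v b"
    using edge[OF \<open>a \<in> V\<close>] dist by (auto simp: transpose_def)
  then have "\<alpha> = \<beta>"
    using two_block_graph_edge[OF G, of u a] two_block_graph_edge[OF G, of v b] A B \<open>A \<subseteq> V\<close>
    by auto
  \<comment> \<open>any further vertex w is fixed, so E u w = E v w; but one side is \<gamma>, the other \<alpha> = \<beta>\<close>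
  have "V \<subseteq> {u, v, a, b}"
  proof
    fix w assume "w \<in> V"
    show "w \<in> {u, v, a, b}"
    proof (rule ccontr)
      assume "w \<notin> {u, v, a, b}"
      then have "E u w \<longleftrightarrow> E v w" using edge[OF \<open>w \<in> V\<close>] by (auto simp: transpose_def)
      then show False
        using two_block_graph_edge[OF G, of u w] two_block_graph_edge[OF G, of v w]
          \<open>w \<in> V\<close> \<open>w \<notin> {u, v, a, b}\<close> A B \<open>A \<subseteq> V\<close> \<open>\<alpha> = \<beta>\<close> ne
        by (cases "w \<in> A") auto
    qed
  qed
  then show ?thesis using \<open>\<alpha> = \<beta>\<close> A B \<open>A \<subseteq> V\<close> by auto
qed

lemma two_block_graph_blocks_of_size_two:
  assumes g: "graph V E" and no: "\<nexists>c. distinguishing_coloring V E (card V - 2) c"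
    and G: "two_block_graph V E A \<alpha> \<beta> \<gamma>" and "2 \<le> card A" "2 \<le> card (V - A)"
    and "\<alpha> \<noteq> \<gamma> \<or> \<beta> \<noteq> \<gamma>"
  shows "card A = 2 \<and> card (V - A) = 2 \<and> \<alpha> = \<beta>"
proof -
  have "A \<subseteq> V" using two_block_graph_subset[OF G] .
  obtain u a where A: "u \<in> A" "a \<in> A" "u \<noteq> a"
    using two_le_card_obtain[OF \<open>2 \<le> card A\<close>] by blast
  obtain v b where B: "v \<in> V - A" "b \<in> V - A" "v \<noteq> b"
    using two_le_card_obtain[OF \<open>2 \<le> card (V - A)\<close>] by blast
  have "\<not> twins V E u v" "\<not> twins V E a b"
    using two_block_graph_not_twins_iff[OF graph_finite[OF g] G] A B assms(4-6) by auto
  moreover have "{u, v, a, b} \<subseteq> V" "distinct [u, v, a, b]"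
    using A B \<open>A \<subseteq> V\<close> by auto
  ultimately have "automorphism V E (transpose u v \<circ> transpose a b)"
    using twins_or_automorphism_double_transposition[OF g no] by blast
  then have "\<alpha> = \<beta>" "A = {u, a}" and B_eq: "V - A = {v, b}"
    using two_block_graph_double_transposition[OF G _ A B assms(6)] by blast+
  then show ?thesis unfolding B_eq using A B by simp
qed

lemma exceptional_graph_if_no_distinguishing_coloring:
  assumes g: "graph V E" and "\<exists>c. distinguishing_coloring V E (card V - 1) c"
    and no: "\<nexists>c. distinguishing_coloring V E (card V - 2) c"
  shows "exceptional_graph V E"
proof -
  have "finite V" using graph_finite[OF g] .
  have "V \<noteq> {}" using no by (auto simp: distinguishing_coloring_def)
  then obtain u v where "u \<in> V" "v \<in> V" and nt: "\<not> twins V E u v"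
    using ex_distinguishing_coloring_card_minus_one_iff[OF g] assms(2) by blast
  define A where "A = {w \<in> V. twins V E u w}"
  obtain \<alpha> \<beta> where G: "two_block_graph V E A \<alpha> \<beta> (E u v)"
    using two_block_graph_of_twin_class[OF g no \<open>u \<in> V\<close> \<open>v \<in> V\<close> nt] unfolding A_def by blast
  have "A \<subseteq> V" "u \<in> A" "v \<in> V - A"
    using \<open>u \<in> V\<close> \<open>v \<in> V\<close> nt twins_refl by (auto simp: A_def)
  have witness: "2 \<le> card A \<and> \<alpha> \<noteq> E u v \<or> 2 \<le> card (V - A) \<and> \<beta> \<noteq> E u v"
    using two_block_graph_not_twins_iff[OF \<open>finite V\<close> G \<open>u \<in> A\<close> \<open>v \<in> V - A\<close>] nt by blast
  have "0 < card A" "0 < card (V - A)"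
    using \<open>u \<in> A\<close> \<open>v \<in> V - A\<close> \<open>finite V\<close> \<open>A \<subseteq> V\<close> finite_subset card_gt_0_iff by blast+
  then consider "card (V - A) = 1" | "card A = 1" | "2 \<le> card A" "2 \<le> card (V - A)"
    by linarith
  then show ?thesis
  proof cases
    case 1
    then show ?thesis using witness by (intro exceptional_graphI[OF G]) auto
  next
    case 2
    then have "card (V - (V - A)) = 1" using \<open>A \<subseteq> V\<close> by (simp add: double_diff)
    then show ?thesis
      using witness 2 by (intro exceptional_graphI[OF two_block_graph_complement[OF G]]) auto
  next
    case 3
    then show ?thesis
      using two_block_graph_blocks_of_size_two[OF g no G] witness
      by (intro exceptional_graphI[OF G]) auto
  qed
qed

lemma exceptional_graph_iff_distinguishing_colorings:
  assumes "graph V E"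
  shows "(\<exists>c. distinguishing_coloring V E (card V - 1) c) \<and>
    \<not> (\<exists>c. distinguishing_coloring V E (card V - 2) c) \<longleftrightarrow> exceptional_graph V E"
  using exceptional_graph_if_no_distinguishing_coloring exceptional_graph_ex_distinguishing_coloring
    exceptional_graph_no_distinguishing_coloring assms by blast

theorem theorem4p2:
  fixes V :: "'a set" and E :: "'a \<Rightarrow> 'a \<Rightarrow> bool"
  assumes "graph V E"
  shows "int (distinguishing_number V E) = int (card V) - 1 \<longleftrightarrow>
           isomorphic V E C4_V C4_E \<or>
           isomorphic V E twoK2_V twoK2_E \<or>
           (\<exists>t\<ge>2. isomorphic V E (star_V t) (star_E t)) \<or>
           (\<exists>t\<ge>2. isomorphic V E (cliqueK1_V t) (cliqueK1_E t))"
proof -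
  have "finite V" using graph_finite[OF assms] .
  have "int (distinguishing_number V E) = int (card V) - 1 \<longleftrightarrow>
      (\<exists>c. distinguishing_coloring V E (card V - 1) c) \<and>
      \<not> (\<exists>c. distinguishing_coloring V E (card V - 2) c)"
    by (rule int_distinguishing_number_eq_card_minus_one_iff[OF \<open>finite V\<close>])
  also have "\<dots> \<longleftrightarrow> exceptional_graph V E"
    by (rule exceptional_graph_iff_distinguishing_colorings[OF assms])
  also have "\<dots> \<longleftrightarrow> isomorphic V E C4_V C4_E \<or> isomorphic V E twoK2_V twoK2_E \<or>
      (\<exists>t\<ge>2. isomorphic V E (star_V t) (star_E t)) \<or>
      (\<exists>t\<ge>2. isomorphic V E (cliqueK1_V t) (cliqueK1_E t))"
    by (rule exceptional_graph_iff_isomorphic[OF \<open>finite V\<close>])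
  finally show ?thesis .
qed

end
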